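(* Let $L'$ be a lattice (join $+$, meet $\cdot$, order $\le'$) and let $(L_x)_{x\in S}$ be a family of sublattices of $L'$, each of finite length and carrying the order induced by $L'$, which forms an $S$-glued system. Assume that either $S$ is modular, or $0_x+0_y=0_{x\vee y}$ and $1_x\cdot 1_y=1_{x\wedge y}$ in $L'$ for all $x,y\in S$. Then $\bigcup_{x\in S}L_x$ is a sublattice of $L'$, and the order of the $S$-glued sum of $(L_x)_{x\in S}$ coincides with the restriction of $\le'$ to $\bigcup_{x\in S}L_x$.
   Context: Let $S$ be a lattice of finite length (every chain in $S$ is finite), with order $\le$, join $\vee$ and meet $\wedge$; $x\prec y$ means that $y$ covers $x$. An \emph{$S$-glued system} is a family $(L_x,\le_x)_{x\in S}$ of lattices of finite length (with least element $0_x$, greatest element $1_x$), whose underlying sets may overlap, such that for all $x,y\in S$: (1) if $x\le y$ and $L_x\cap L_y\ne\emptyset$, then $L_x\cap L_y$ is a filter of $L_x$ and an ideal of $L_y$; (2) in the situation of (1), for all $a,b\in L_x\cap L_y$: $a\le_x b$ iff $a\le_y b$; (3) if $x\prec y$ then $L_x\cap L_y\ne\emptyset$; (4) $L_x\cap L_y\subseteq L_{x\wedge y}\cap L_{x\vee y}$. The \emph{$S$-glued sum} of the system is the set $L=\bigcup_{x\in S}L_x$ equipped with the relation defined as the transitive closure of $\bigcup_{x\in S}\le_x$. *)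

theory Defs
  imports Main
begin

definition finite_length_on :: "'a::order set \<Rightarrow> bool" where
  "finite_length_on A \<longleftrightarrow>
     (\<forall>C. C \<subseteq> A \<and> (\<forall>a\<in>C. \<forall>b\<in>C. a \<le> b \<or> b \<le> a) \<longrightarrow> finite C)"

definition sublattice :: "'a::lattice set \<Rightarrow> bool" where
  "sublattice A \<longleftrightarrow> A \<noteq> {} \<and> (\<forall>a\<in>A. \<forall>b\<in>A. sup a b \<in> A \<and> inf a b \<in> A)"

definition bot_of :: "'a::order set \<Rightarrow> 'a" where
  "bot_of A = (THE z. z \<in> A \<and> (\<forall>y\<in>A. z \<le> y))"

definition top_of :: "'a::order set \<Rightarrow> 'a" where
  "top_of A = (THE z. z \<in> A \<and> (\<forall>y\<in>A. y \<le> z))"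

definition is_filter_in :: "'a::lattice set \<Rightarrow> 'a set \<Rightarrow> bool" where
  "is_filter_in F A \<longleftrightarrow> F \<noteq> {} \<and> F \<subseteq> A \<and>
     (\<forall>a\<in>F. \<forall>b\<in>A. a \<le> b \<longrightarrow> b \<in> F) \<and> (\<forall>a\<in>F. \<forall>b\<in>F. inf a b \<in> F)"

definition is_ideal_in :: "'a::lattice set \<Rightarrow> 'a set \<Rightarrow> bool" where
  "is_ideal_in I A \<longleftrightarrow> I \<noteq> {} \<and> I \<subseteq> A \<and>
     (\<forall>a\<in>I. \<forall>b\<in>A. b \<le> a \<longrightarrow> b \<in> I) \<and> (\<forall>a\<in>I. \<forall>b\<in>I. sup a b \<in> I)"

definition covers :: "'s::order \<Rightarrow> 's \<Rightarrow> bool" where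
  "covers x y \<longleftrightarrow> x < y \<and> \<not> (\<exists>z. x < z \<and> z < y)"

definition modular_lattice :: "'s::lattice itself \<Rightarrow> bool" where
  "modular_lattice _ \<longleftrightarrow> (\<forall>a b c::'s. a \<le> c \<longrightarrow> sup a (inf b c) = inf (sup a b) c)"

text \<open>S-glued system of sublattices (L x) of an ambient lattice, each with the induced order
  (so condition (2) holds automatically).\<close>
definition glued_system :: "('s::lattice \<Rightarrow> 'a::lattice set) \<Rightarrow> bool" where
  "glued_system L \<longleftrightarrow>
     (\<forall>x y. x \<le> y \<and> L x \<inter> L y \<noteq> {} \<longrightarrow>
        is_filter_in (L x \<inter> L y) (L x) \<and> is_ideal_in (L x \<inter> L y) (L y)) \<and>
     (\<forall>x y. covers x y \<longrightarrow> L x \<inter> L y \<noteq> {}) \<and>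
     (\<forall>x y. L x \<inter> L y \<subseteq> L (inf x y) \<inter> L (sup x y))"

definition glued_order :: "('s \<Rightarrow> 'a::order set) \<Rightarrow> ('a \<times> 'a) set" where
  "glued_order L = {(a, b). \<exists>x. a \<in> L x \<and> b \<in> L x \<and> a \<le> b}\<^sup>+"

end

theory Submission
  imports Defs "HOL-Library.Dual_Ordered_Lattice"
begin

(*
  Write 0_x for the least element of L_x. If x \<prec> t, then L_x \<inter> L_t
  is an ideal of L_t and a filter of L_x, so 0_t \<in> L_x, and a \<mapsto> a + 0_t maps L_x into
  L_x \<inter> L_t by one step of the glued order. Iterating along a maximal chain from x to z \<ge> x
  shows that a + 0_z \<in> L_z and that a is below a + 0_z in the glued order; in particular
  x \<mapsto> 0_x is monotone.

  Now assume 0_(x \<squnion> y) \<le> 0_x + 0_y. For a \<in> L_x, b \<in> L_y and z = x \<squnion> y the join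
  a + b = (a + 0_z) + (b + 0_z) lies in L_z, and if a \<le> b then a, a + 0_z, b is a chain in
  the glued order. The assumption holds when S is modular: for two covers x, y of a common
  element it is condition (4) applied to 0_x + 0_y \<in> L_x \<inter> L_y, and the general case reduces
  to this one by induction on x \<sqinter> y, splitting [x \<sqinter> y, x \<squnion> y] into two smaller intervals
  by modularity. Meets are handled by order duality, under which glued systems are self-dual.
*)

section \<open>Lattices of finite length\<close>

lemma finite_length_on_wf_greater:
  assumes "finite_length_on A"
  shows "wf {(a, b). a \<in> A \<and> b \<in> A \<and> b < a}"
  unfolding wf_iff_no_infinite_down_chain
proof
  assume "\<exists>f. \<forall>i. (f (Suc i), f i) \<in> {(a, b). a \<in> A \<and> b \<in> A \<and> b < a}"
  then obtain f where f: "\<And>i. f i \<in> A" "\<And>i. f i < f (Suc i)" by blast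
  then have "strict_mono f" by (simp add: strict_mono_Suc_iff)
  then have "inj f" and "\<forall>a\<in>range f. \<forall>b\<in>range f. a \<le> b \<or> b \<le> a"
    by (auto intro: injI simp: strict_mono_eq strict_mono_less_eq nat_le_linear)
  moreover have "range f \<subseteq> A" using f(1) by blast
  ultimately have "finite (range f)" using assms unfolding finite_length_on_def by blast
  with \<open>inj f\<close> show False using finite_imageD by fastforce
qed

lemma finite_length_on_dual_image:
  assumes "finite_length_on A"
  shows "finite_length_on (dual ` A)"
  unfolding finite_length_on_def
proof (intro allI impI)
  fix C assume C: "C \<subseteq> dual ` A \<and> (\<forall>a\<in>C. \<forall>b\<in>C. a \<le> b \<or> b \<le> a)"
  then have "undual ` C \<subseteq> A" "\<forall>a\<in>undual ` C. \<forall>b\<in>undual ` C. a \<le> b \<or> b \<le> a"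
    by (auto simp: dual_less_eq_iff)
  then have "finite (undual ` C)" using assms unfolding finite_length_on_def by blast
  then show "finite C" using finite_imageD inj_undual inj_on_subset by blast
qed

lemma finite_length_on_wf_less:
  assumes "finite_length_on A"
  shows "wf {(a, b). a \<in> A \<and> b \<in> A \<and> a < b}"
proof -
  have "wf (inv_image {(a, b). a \<in> dual ` A \<and> b \<in> dual ` A \<and> b < a} dual)"
    using finite_length_on_wf_greater[OF finite_length_on_dual_image[OF assms]] by (rule wf_inv_image)
  also have "inv_image {(a, b). a \<in> dual ` A \<and> b \<in> dual ` A \<and> b < a} dual
      = {(a, b). a \<in> A \<and> b \<in> A \<and> a < b}"
    by (auto simp: inv_image_def inj_image_mem_iff[OF inj_dual])
  finally show ?thesis .
qed

lemma bot_of_least: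
  assumes "sublattice A" "finite_length_on A"
  shows "bot_of A \<in> A" "\<And>a. a \<in> A \<Longrightarrow> bot_of A \<le> a"
proof -
  obtain a where "a \<in> A" using assms(1) unfolding sublattice_def by blast
  from wfE_min[OF finite_length_on_wf_less[OF assms(2)] this] obtain m where m: "m \<in> A"
    and minimal: "\<And>b. (b, m) \<in> {(a, b). a \<in> A \<and> b \<in> A \<and> a < b} \<Longrightarrow> b \<notin> A"
    by blast
  have least: "m \<le> b" if "b \<in> A" for b
  proof -
    have "inf m b \<in> A" using assms(1) m that unfolding sublattice_def by blast
    then have "\<not> inf m b < m" using minimal m by blast
    then have "inf m b = m" using inf.cobounded1[of m b] by (simp add: order.strict_iff_order)
    then show ?thesis by (metis inf.cobounded2)
  qed
  have "bot_of A = m"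
    unfolding bot_of_def
    by (rule the_equality) (use m least in \<open>auto intro: order.antisym\<close>)
  then show "bot_of A \<in> A" "\<And>a. a \<in> A \<Longrightarrow> bot_of A \<le> a" using m least by simp_all
qed

lemma covers_above:
  fixes x y :: "'s::order"
  assumes "finite_length_on (UNIV :: 's set)" "x < y"
  obtains t where "covers x t" "t \<le> y"
proof -
  from wfE_min[OF finite_length_on_wf_less[OF assms(1)], of y "{t. x < t \<and> t \<le> y}"] assms(2)
  obtain t where t: "x < t" "t \<le> y" and minimal: "\<And>s. s < t \<Longrightarrow> \<not> (x < s \<and> s \<le> y)"
    by auto
  have "covers x t"
    unfolding covers_def using t minimal by (meson order.strict_implies_order order.trans)
  with t(2) that show thesis by blast
qed

lemma le_iff_rtrancl_covers:
  fixes x y :: "'s::order"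
  assumes fin: "finite_length_on (UNIV :: 's set)"
  shows "x \<le> y \<longleftrightarrow> (x, y) \<in> {(a, b). covers a b}\<^sup>*"
proof
  show "x \<le> y \<Longrightarrow> (x, y) \<in> {(a, b). covers a b}\<^sup>*"
    using finite_length_on_wf_greater[OF fin]
  proof (induction x rule: wf_induct_rule)
    case (less x)
    show ?case
    proof (cases "x = y")
      case False
      with less.prems have "x < y" by simp
      with fin obtain t where t: "covers x t" "t \<le> y" by (rule covers_above)
      then have "(t, y) \<in> {(a, b). covers a b}\<^sup>*" using less.IH by (simp add: covers_def)
      with t(1) show ?thesis by (simp add: converse_rtrancl_into_rtrancl)
    qed simp
  qed
  show "(x, y) \<in> {(a, b). covers a b}\<^sup>* \<Longrightarrow> x \<le> y"
    by (induction rule: rtrancl_induct) (auto simp: covers_def)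
qed

lemma modular_sup_le_of_covers:
  fixes f :: "'s::lattice \<Rightarrow> 'b::lattice"
  assumes fin: "finite_length_on (UNIV :: 's set)"
    and modular: "modular_lattice TYPE('s)"
    and "mono f"
    and covers: "\<And>w x y. covers w x \<Longrightarrow> covers w y \<Longrightarrow> f (sup x y) \<le> sup (f x) (f y)"
  shows "f (sup x y) \<le> sup (f x) (f y)"
  using finite_length_on_wf_greater[OF fin]
proof (induction "inf x y" arbitrary: x y rule: wf_induct_rule)
  case less
  have modular_law: "a \<le> c \<Longrightarrow> sup a (inf b c) = inf (sup a b) c" for a b c :: 's
    using modular unfolding modular_lattice_def by blast
  let ?w = "inf x y"
  consider "x \<le> y" | "y \<le> x" | "?w < x" "?w < y"
    by (metis inf.cobounded1 inf.cobounded2 order.not_eq_order_implies_strict)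
  then show ?case
  proof cases
    case 3
    \<comment> \<open>The pairs (x, x1 \<squnion> y1) and (x \<squnion> y1, y) have meets x1 and y1 above x \<sqinter> y and
       joins x \<squnion> y1 and x \<squnion> y, so the induction hypothesis applies to both.\<close>
    obtain x1 where x1: "covers ?w x1" "x1 \<le> x" using fin \<open>?w < x\<close> by (rule covers_above)
    obtain y1 where y1: "covers ?w y1" "y1 \<le> y" using fin \<open>?w < y\<close> by (rule covers_above)
    have "?w < x1" "?w < y1" using x1(1) y1(1) by (simp_all add: covers_def)
    have "inf y1 x = ?w"
      using y1(2) \<open>?w < y1\<close> by (metis inf.absorb1 inf.strict_order_iff inf_commute inf_left_commute)
    then have "inf x (sup x1 y1) = x1"
      using modular_law[OF x1(2), of y1] \<open>?w < x1\<close> by (simp add: inf_commute sup.absorb1)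
    moreover have "sup x (sup x1 y1) = sup x y1" using x1(2) by (metis sup.absorb1 sup_assoc)
    ultimately have "f (sup x y1) \<le> sup (f x) (f (sup x1 y1))"
      using less[of x "sup x1 y1"] \<open>?w < x1\<close> by simp
    moreover have "f (sup x1 y1) \<le> sup (f x) (f y)"
      using covers[OF x1(1) y1(1)] monoD[OF \<open>mono f\<close> x1(2)] monoD[OF \<open>mono f\<close> y1(2)]
      by (meson order.trans sup_mono)
    ultimately have "f (sup x y1) \<le> sup (f x) (f y)" by (meson order.trans sup.cobounded1 sup_least)
    moreover have "inf (sup x y1) y = y1"
      using modular_law[OF y1(2), of x] \<open>?w < y1\<close> by (simp add: sup_commute sup.absorb1)
    moreover have "sup (sup x y1) y = sup x y" using y1(2) by (simp add: sup.absorb2 sup_assoc)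
    ultimately show ?thesis
      using less[of "sup x y1" y] \<open>?w < y1\<close> by (simp add: le_supI1 order.trans)
  qed (simp_all add: sup.absorb1 sup.absorb2 le_supI1 le_supI2)
qed

section \<open>Order duality\<close>

lemma mem_dual_image_iff:
  "x \<in> dual ` A \<longleftrightarrow> undual x \<in> A"
  by (metis dual_undual image_iff undual_dual)

lemma sublattice_dual_image:
  assumes "sublattice A"
  shows "sublattice (dual ` A)"
  using assms unfolding sublattice_def by (simp add: mem_dual_image_iff)

lemma bot_of_dual_image:
  assumes "sublattice A" "finite_length_on A"
  shows "bot_of (dual ` A) = dual (top_of A)"
proof -
  let ?m = "bot_of (dual ` A)"
  note least = bot_of_least[OF sublattice_dual_image[OF assms(1)] finite_length_on_dual_image[OF assms(2)]]
  have greatest: "a \<le> undual ?m" if "a \<in> A" for a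
    using least(2)[of "dual a"] that by (simp add: dual_less_eq_iff)
  have "top_of A = undual ?m"
    unfolding top_of_def
  proof (rule the_equality)
    show "undual ?m \<in> A \<and> (\<forall>a\<in>A. a \<le> undual ?m)"
      using least(1) greatest by auto
    show "t = undual ?m" if "t \<in> A \<and> (\<forall>a\<in>A. a \<le> t)" for t
      using that least(1) greatest by (auto intro: order.antisym)
  qed
  then show ?thesis by simp
qed

lemma is_filter_in_dual_image:
  "is_filter_in (dual ` F) (dual ` A) \<longleftrightarrow> is_ideal_in F A"
  unfolding is_filter_in_def is_ideal_in_def
  by (auto simp: mem_dual_image_iff image_subset_iff)

lemma is_ideal_in_dual_image:
  "is_ideal_in (dual ` I) (dual ` A) \<longleftrightarrow> is_filter_in I A"
  unfolding is_filter_in_def is_ideal_in_def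
  by (auto simp: mem_dual_image_iff image_subset_iff)

lemma covers_dual_iff:
  "covers (dual x) (dual y) \<longleftrightarrow> covers y x"
  unfolding covers_def by (metis dual_undual less_dual_iff)

lemma glued_system_dual:
  fixes L :: "'s::lattice \<Rightarrow> 'a::lattice set"
  assumes "glued_system L"
  shows "glued_system (\<lambda>x. dual ` L (undual x))"
proof -
  have filter_ideal:
    "is_filter_in (dual ` (L (undual x) \<inter> L (undual y))) (dual ` L (undual x)) \<and>
     is_ideal_in (dual ` (L (undual x) \<inter> L (undual y))) (dual ` L (undual y))"
    if "x \<le> y" "dual ` (L (undual x) \<inter> L (undual y)) \<noteq> {}" for x y :: "'s dual"
  proof -
    have "undual y \<le> undual x" "L (undual y) \<inter> L (undual x) \<noteq> {}"
      using that by (auto simp: dual_less_eq_iff)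
    then have "is_filter_in (L (undual y) \<inter> L (undual x)) (L (undual y))"
      "is_ideal_in (L (undual y) \<inter> L (undual x)) (L (undual x))"
      using assms unfolding glued_system_def by blast+
    then show ?thesis by (simp add: is_filter_in_dual_image is_ideal_in_dual_image Int_commute)
  qed
  have covers_nonempty: "dual ` (L (undual x) \<inter> L (undual y)) \<noteq> {}"
    if "covers x y" for x y :: "'s dual"
  proof -
    have "covers (undual y) (undual x)" using that covers_dual_iff[of "undual x" "undual y"] by simp
    then show ?thesis using assms unfolding glued_system_def by blast
  qed
  have "dual ` (L (undual x) \<inter> L (undual y))
      \<subseteq> dual ` (L (undual (inf x y)) \<inter> L (undual (sup x y)))" for x y :: "'s dual"
    using assms unfolding glued_system_def by (intro image_mono) simp
  with filter_ideal covers_nonempty show ?thesis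
    unfolding glued_system_def image_Int[OF inj_dual, symmetric] by simp
qed

lemma modular_lattice_dual:
  assumes "modular_lattice TYPE('s::lattice)"
  shows "modular_lattice TYPE('s dual)"
  unfolding modular_lattice_def
proof (intro allI impI)
  fix a b c :: "'s dual"
  assume "a \<le> c"
  then have "sup (undual c) (inf (undual b) (undual a)) = inf (sup (undual c) (undual b)) (undual a)"
    using assms unfolding modular_lattice_def by (simp add: dual_less_eq_iff)
  then show "sup a (inf b c) = inf (sup a b) c"
    by (intro dual_eqI) (simp add: inf_commute sup_commute)
qed

section \<open>Glued systems\<close>

lemma glued_order_imp_le:
  "(a, b) \<in> glued_order L \<Longrightarrow> a \<le> b"
  unfolding glued_order_def by (induction rule: trancl_induct) (auto intro: order.trans)

lemma trans_glued_order: "trans (glued_order L)"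
  unfolding glued_order_def by (rule trans_trancl)

locale glued_lattice_system =
  fixes L :: "'s::lattice \<Rightarrow> 'a::lattice set"
  assumes finite_length_index: "finite_length_on (UNIV :: 's set)"
    and sublattice_component: "\<And>x. sublattice (L x)"
    and finite_length_component: "\<And>x. finite_length_on (L x)"
    and glued: "glued_system L"
begin

lemma bot_of_mem: "bot_of (L x) \<in> L x"
  and bot_of_le: "a \<in> L x \<Longrightarrow> bot_of (L x) \<le> a"
  using bot_of_least[OF sublattice_component finite_length_component] by blast+

lemma sup_mem_component: "a \<in> L x \<Longrightarrow> b \<in> L x \<Longrightarrow> sup a b \<in> L x"
  using sublattice_component unfolding sublattice_def by blast

lemma component_le_imp_glued_order:
  "a \<in> L x \<Longrightarrow> b \<in> L x \<Longrightarrow> a \<le> b \<Longrightarrow> (a, b) \<in> glued_order L"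
  unfolding glued_order_def by blast

lemma covers_inter_nonempty: "covers x t \<Longrightarrow> L x \<inter> L t \<noteq> {}"
  using glued unfolding glued_system_def by blast

lemma inter_up_closed:
  assumes "x \<le> t" "c \<in> L x \<inter> L t" "b \<in> L x" "c \<le> b"
  shows "b \<in> L t"
  using assms glued unfolding glued_system_def is_filter_in_def by blast

lemma inter_down_closed:
  assumes "x \<le> t" "c \<in> L x \<inter> L t" "b \<in> L t" "b \<le> c"
  shows "b \<in> L x"
  using assms glued unfolding glued_system_def is_ideal_in_def by blast

lemma mem_component_sup: "c \<in> L x \<Longrightarrow> c \<in> L y \<Longrightarrow> c \<in> L (sup x y)"
  using glued unfolding glued_system_def by blast

lemma bot_of_covers_mem:
  assumes "covers x t"
  shows "bot_of (L t) \<in> L x"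
proof -
  obtain c where c: "c \<in> L x \<inter> L t" using covers_inter_nonempty[OF assms] by blast
  have "x \<le> t" using assms by (simp add: covers_def less_imp_le)
  from this c bot_of_mem show ?thesis
    by (rule inter_down_closed) (use c bot_of_le in blast)
qed

lemma bot_of_mono:
  assumes "x \<le> y"
  shows "bot_of (L x) \<le> bot_of (L y)"
  using le_iff_rtrancl_covers[OF finite_length_index, THEN iffD1, OF assms]
proof (induction rule: rtrancl_induct)
  case (step t u)
  then have "bot_of (L t) \<le> bot_of (L u)" using bot_of_covers_mem bot_of_le by simp
  with step.IH show ?case by (rule order.trans)
qed simp

lemma sup_bot_of_mem:
  assumes "x \<le> z" "a \<in> L x"
  shows "sup a (bot_of (L z)) \<in> L z \<and> (a, sup a (bot_of (L z))) \<in> (glued_order L)\<^sup>*"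
  using le_iff_rtrancl_covers[OF finite_length_index, THEN iffD1, OF assms(1)] assms(2)
proof (induction arbitrary: a rule: converse_rtrancl_induct)
  case base
  then show ?case using bot_of_le by (simp add: sup.absorb1)
next
  case (step x t)
  then have "covers x t" "t \<le> z" by (auto simp: le_iff_rtrancl_covers[OF finite_length_index])
  let ?a = "sup a (bot_of (L t))"
  have "?a \<in> L x"
    using step.prems bot_of_covers_mem[OF \<open>covers x t\<close>] by (simp add: sup_mem_component)
  moreover have "?a \<in> L t"
    using \<open>covers x t\<close> bot_of_covers_mem[OF \<open>covers x t\<close>] bot_of_mem \<open>?a \<in> L x\<close>
    by (intro inter_up_closed[of x t "bot_of (L t)"]) (auto simp: covers_def)
  ultimately have "(a, ?a) \<in> glued_order L" "sup ?a (bot_of (L z)) = sup a (bot_of (L z))"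
    using step.prems component_le_imp_glued_order bot_of_mono[OF \<open>t \<le> z\<close>]
    by (auto simp: sup_assoc sup.absorb2)
  with step.IH[OF \<open>?a \<in> L t\<close>] show ?case by (auto intro: converse_rtrancl_into_rtrancl)
qed

lemma bot_of_sup_covers_le:
  assumes "covers w x" "covers w y"
  shows "bot_of (L (sup x y)) \<le> sup (bot_of (L x)) (bot_of (L y))"
proof -
  let ?c = "sup (bot_of (L x)) (bot_of (L y))"
  have "w \<le> x" "w \<le> y" using assms by (simp_all add: covers_def less_imp_le)
  have "?c \<in> L w"
    using bot_of_covers_mem[OF assms(1)] bot_of_covers_mem[OF assms(2)] by (rule sup_mem_component)
  then have "?c \<in> L x" "?c \<in> L y"
    using inter_up_closed[OF \<open>w \<le> x\<close>, of "bot_of (L x)"]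
      inter_up_closed[OF \<open>w \<le> y\<close>, of "bot_of (L y)"]
      bot_of_covers_mem[OF assms(1)] bot_of_covers_mem[OF assms(2)] bot_of_mem
    by auto
  then show ?thesis using mem_component_sup bot_of_le by blast
qed

lemma bot_of_sup_le_if_modular:
  assumes "modular_lattice TYPE('s)"
  shows "bot_of (L (sup x y)) \<le> sup (bot_of (L x)) (bot_of (L y))"
  using finite_length_index assms
  by (rule modular_sup_le_of_covers) (auto intro: monoI bot_of_mono bot_of_sup_covers_le)

lemma sup_mem_component_sup:
  assumes bot_of_sup: "\<And>x y. bot_of (L (sup x y)) \<le> sup (bot_of (L x)) (bot_of (L y))"
    and "a \<in> L x" "b \<in> L y"
  shows "sup a b \<in> L (sup x y)"
proof -
  let ?z = "sup x y"
  have "sup (sup a (bot_of (L ?z))) (sup b (bot_of (L ?z))) \<in> L ?z"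
    using sup_bot_of_mem[of x ?z a] sup_bot_of_mem[of y ?z b] assms(2,3) by (simp add: sup_mem_component)
  moreover have "bot_of (L ?z) \<le> sup a b"
    using bot_of_sup[of x y] bot_of_le[OF assms(2)] bot_of_le[OF assms(3)]
    by (meson order.trans sup.mono)
  moreover have "sup (sup a (bot_of (L ?z))) (sup b (bot_of (L ?z))) = sup (sup a b) (bot_of (L ?z))"
    by (simp add: ac_simps)
  ultimately show ?thesis by (simp add: sup.absorb1)
qed

lemma le_imp_glued_order:
  assumes bot_of_sup: "\<And>x y. bot_of (L (sup x y)) \<le> sup (bot_of (L x)) (bot_of (L y))"
    and "a \<in> L x" "b \<in> L y" "a \<le> b"
  shows "(a, b) \<in> glued_order L"
proof -
  let ?z = "sup x y" and ?a = "sup a (bot_of (L (sup x y)))"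
  have "b \<in> L ?z" using sup_mem_component_sup[OF bot_of_sup assms(2,3)] assms(4)
    by (simp add: sup.absorb2)
  then have "(?a, b) \<in> glued_order L"
    using sup_bot_of_mem[of x ?z a] assms(2,4) bot_of_le
    by (intro component_le_imp_glued_order[of _ ?z]) auto
  moreover have "(a, ?a) \<in> (glued_order L)\<^sup>*" using sup_bot_of_mem[of x ?z a] assms(2) by simp
  ultimately show ?thesis
    using rtrancl_into_trancl1 trancl_id[OF trans_glued_order] by metis
qed

lemma dual_system: "glued_lattice_system (\<lambda>x. dual ` L (undual x))"
proof
  show "finite_length_on (UNIV :: 's dual set)"
    using finite_length_on_dual_image[OF finite_length_index] by (simp add: surj_dual)
qed (simp_all add: sublattice_dual_image sublattice_component finite_length_on_dual_image
    finite_length_component glued_system_dual glued)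

lemma bot_of_dual_component: "bot_of (dual ` L x) = dual (top_of (L x))"
  using sublattice_component finite_length_component by (rule bot_of_dual_image)

lemma inf_mem_component_inf:
  assumes top_of_inf: "\<And>x y. inf (top_of (L x)) (top_of (L y)) \<le> top_of (L (inf x y))"
    and "a \<in> L x" "b \<in> L y"
  shows "inf a b \<in> L (inf x y)"
proof -
  interpret dual: glued_lattice_system "\<lambda>x. dual ` L (undual x)" by (rule dual_system)
  have "sup (dual a) (dual b) \<in> dual ` L (undual (sup (dual x) (dual y)))"
    using top_of_inf assms(2,3)
    by (intro dual.sup_mem_component_sup) (simp_all add: bot_of_dual_component dual_less_eq_iff)
  then show ?thesis by (simp add: mem_dual_image_iff)
qed

lemma top_of_inf_ge_if_modular:
  assumes "modular_lattice TYPE('s)"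
  shows "inf (top_of (L x)) (top_of (L y)) \<le> top_of (L (inf x y))"
proof -
  interpret dual: glued_lattice_system "\<lambda>x. dual ` L (undual x)" by (rule dual_system)
  show ?thesis
    using dual.bot_of_sup_le_if_modular[OF modular_lattice_dual[OF assms], of "dual x" "dual y"]
    by (simp add: bot_of_dual_component dual_less_eq_iff)
qed

end

theorem corollary5p4:
  fixes L :: "'s::lattice \<Rightarrow> 'a::lattice set"
  assumes S_fin: "finite_length_on (UNIV :: 's set)"
    and L_sub: "\<And>x. sublattice (L x)"
    and L_fin: "\<And>x. finite_length_on (L x)"
    and glued: "glued_system L"
    and alt: "modular_lattice TYPE('s) \<or>
              (\<forall>x y. sup (bot_of (L x)) (bot_of (L y)) = bot_of (L (sup x y)) \<and>
                     inf (top_of (L x)) (top_of (L y)) = top_of (L (inf x y)))"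
  shows "sublattice (\<Union>x. L x) \<and>
         (\<forall>a\<in>(\<Union>x. L x). \<forall>b\<in>(\<Union>x. L x). (a, b) \<in> glued_order L \<longleftrightarrow> a \<le> b)"
proof -
  interpret glued_lattice_system L using S_fin L_sub L_fin glued by unfold_locales
  have bot_of_sup: "bot_of (L (sup x y)) \<le> sup (bot_of (L x)) (bot_of (L y))" for x y
    using alt bot_of_sup_le_if_modular by force
  have top_of_inf: "inf (top_of (L x)) (top_of (L y)) \<le> top_of (L (inf x y))" for x y
    using alt top_of_inf_ge_if_modular by force
  have "(\<Union>x. L x) \<noteq> {}" using bot_of_mem by blast
  moreover have "sup a b \<in> (\<Union>x. L x) \<and> inf a b \<in> (\<Union>x. L x)" if "a \<in> L x" "b \<in> L y" for a b x y
    using sup_mem_component_sup[OF bot_of_sup that] inf_mem_component_inf[OF top_of_inf that] by blast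
  moreover have "(a, b) \<in> glued_order L \<longleftrightarrow> a \<le> b" if "a \<in> L x" "b \<in> L y" for a b x y
    using glued_order_imp_le le_imp_glued_order[OF bot_of_sup that] by blast
  ultimately show ?thesis unfolding sublattice_def by blast
qed

end
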